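(* Let $c\in\mathbb{N}$ and let $\pi$ be a $c$-witness. Then there exists a $c$-witness $\pi'$ such that either $\mathrm{cost}_1(\pi')=+\infty$ or $\mathrm{cost}_1(\pi')\le 2|V|W$.
   Context: Reachability game with one-player environment: a finite set $V$ of vertices, edges $E\subseteq V\times V$ (each vertex has a successor), initial vertex $v_0$, two players $0$ and $1$ owning a partition $V_0\uplus V_1$ of $V$, weight functions $w_0,w_1:E\to\mathbb{N}$, $W=\max\{w_i(e)\mid e\in E, i\in\{0,1\}\}$, and target sets $T_0,T_1\subseteq V$. For a play (infinite path) $\pi$, $\mathrm{cost}_i(\pi)$ is the sum of $w_i$ over the edges of the shortest prefix of $\pi$ ending in $T_i$, and $+\infty$ if none. A strategy of player $i$ maps each finite path ending in $V_i$ to a successor of its last vertex. A deviation of a play $\pi$ is a finite path $hv$ ($v\in V$) such that $h$ is a nonempty prefix of $\pi$ but $hv$ is not. A $c$-witness is a play $\pi$ from $v_0$ such that $\mathrm{cost}_0(\pi)\le c$ and, with $d=\mathrm{cost}_1(\pi)$, for every deviation $hv$ of $\pi$, player $0$ has a strategy from $v$ in the two-player zero-sum game (player $0$ against player $1$) such that every play $\pi'$ starting at $v$ consistent with it satisfies $\mathrm{cost}_0(h\pi')\le c$ or $\mathrm{cost}_1(h\pi')>d$. *)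

theory Defs
  imports Main "HOL-Library.Extended_Nat"
begin

text \<open>Arena: vertex set V, edges E, player-0 vertices V0 (player 1 owns V - V0),
  weights w0 w1 on edges, targets T0 T1, initial vertex v0.\<close>

definition well_formed_game ::
  "'v set \<Rightarrow> ('v \<times> 'v) set \<Rightarrow> 'v set \<Rightarrow> 'v set \<Rightarrow> 'v set \<Rightarrow> 'v \<Rightarrow> bool" where
  "well_formed_game V E V0 T0 T1 v0 \<longleftrightarrow>
     finite V \<and> E \<subseteq> V \<times> V \<and> (\<forall>u\<in>V. \<exists>v. (u, v) \<in> E) \<and>
     v0 \<in> V \<and> V0 \<subseteq> V \<and> T0 \<subseteq> V \<and> T1 \<subseteq> V"

definition max_weight :: "('v \<times> 'v) set \<Rightarrow> ('v \<times> 'v \<Rightarrow> nat) \<Rightarrow> ('v \<times> 'v \<Rightarrow> nat) \<Rightarrow> nat" where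
  "max_weight E w0 w1 = Max (w0 ` E \<union> w1 ` E)"

definition is_play :: "('v \<times> 'v) set \<Rightarrow> 'v \<Rightarrow> (nat \<Rightarrow> 'v) \<Rightarrow> bool" where
  "is_play E v \<pi> \<longleftrightarrow> \<pi> 0 = v \<and> (\<forall>i. (\<pi> i, \<pi> (Suc i)) \<in> E)"

definition cost :: "('v \<times> 'v \<Rightarrow> nat) \<Rightarrow> 'v set \<Rightarrow> (nat \<Rightarrow> 'v) \<Rightarrow> enat" where
  "cost w T \<pi> = (if \<exists>n. \<pi> n \<in> T
      then enat (\<Sum>k < (LEAST n. \<pi> n \<in> T). w (\<pi> k, \<pi> (Suc k)))
      else \<infinity>)"

definition concat_play :: "'v list \<Rightarrow> (nat \<Rightarrow> 'v) \<Rightarrow> (nat \<Rightarrow> 'v)" where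
  "concat_play h \<pi>' = (\<lambda>i. if i < length h then h ! i else \<pi>' (i - length h))"

text \<open>Deviation hv of \<pi> with h = \<pi>_0 ... \<pi>_(k-1) (k \<ge> 1) the prefix of length k:
  hv is a finite path, but not a prefix of \<pi>.\<close>
definition deviation :: "('v \<times> 'v) set \<Rightarrow> (nat \<Rightarrow> 'v) \<Rightarrow> nat \<Rightarrow> 'v \<Rightarrow> bool" where
  "deviation E \<pi> k v \<longleftrightarrow> 1 \<le> k \<and> (\<pi> (k - 1), v) \<in> E \<and> v \<noteq> \<pi> k"

definition strategy0 :: "'v set \<Rightarrow> ('v \<times> 'v) set \<Rightarrow> ('v list \<Rightarrow> 'v) \<Rightarrow> bool" where
  "strategy0 V0 E \<sigma> \<longleftrightarrow> (\<forall>p. p \<noteq> [] \<and> last p \<in> V0 \<longrightarrow> (last p, \<sigma> p) \<in> E)"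

definition consistent0 :: "'v set \<Rightarrow> ('v list \<Rightarrow> 'v) \<Rightarrow> (nat \<Rightarrow> 'v) \<Rightarrow> bool" where
  "consistent0 V0 \<sigma> \<pi> \<longleftrightarrow> (\<forall>n. \<pi> n \<in> V0 \<longrightarrow> \<pi> (Suc n) = \<sigma> (map \<pi> [0..<Suc n]))"

definition c_witness ::
  "('v \<times> 'v) set \<Rightarrow> 'v set \<Rightarrow> ('v \<times> 'v \<Rightarrow> nat) \<Rightarrow> ('v \<times> 'v \<Rightarrow> nat) \<Rightarrow> 'v set \<Rightarrow> 'v set
   \<Rightarrow> 'v \<Rightarrow> nat \<Rightarrow> (nat \<Rightarrow> 'v) \<Rightarrow> bool" where
  "c_witness E V0 w0 w1 T0 T1 v0 c \<pi> \<longleftrightarrow>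
     is_play E v0 \<pi> \<and> cost w0 T0 \<pi> \<le> enat c \<and>
     (\<forall>k v. deviation E \<pi> k v \<longrightarrow>
        (\<exists>\<sigma>. strategy0 V0 E \<sigma> \<and>
           (\<forall>\<pi>'. is_play E v \<pi>' \<and> consistent0 V0 \<sigma> \<pi>' \<longrightarrow>
              cost w0 T0 (concat_play (map \<pi> [0..<k]) \<pi>') \<le> enat c \<or>
              cost w1 T1 (concat_play (map \<pi> [0..<k]) \<pi>') > cost w1 T1 \<pi>)))"

end

theory Submission
  imports Defs
begin

text \<open>
  Let \<rho> be a c-witness and \<rho> i = \<rho> j with i < j, where \<rho> does not visit T1
  before j and the cycle \<rho> i \<dots> \<rho> j does not contain the first visit to T0.
  Cutting the cycle out gives again a c-witness: on the cut play and on every play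
  deviating from it, cost0 does not grow, and cost1 drops by exactly the weight of the
  cycle on all plays that agree with \<rho> up to j, so each comparison with cost1 of the
  witness is preserved.  By pigeonhole such a cycle exists within the first 2|V| steps:
  in [0, |V|] if T0 is not visited there, in [|V|, 2|V|] otherwise.  Cutting cycles as
  long as T1 is first reached after step 2|V| thus yields a c-witness whose cost1 is at
  most 2|V|W.
\<close>

definition skip_loop :: "(nat \<Rightarrow> 'v) \<Rightarrow> nat \<Rightarrow> nat \<Rightarrow> nat \<Rightarrow> 'v" where
  "skip_loop \<rho> i j = (\<lambda>t. if t < i then \<rho> t else \<rho> (t + (j - i)))"

lemma skip_loop_upto:
  assumes "i \<le> j" "\<rho> i = \<rho> j" "t \<le> i"
  shows "skip_loop \<rho> i j t = \<rho> t"
  using assms by (auto simp: skip_loop_def)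

lemma skip_loop_shift: "i \<le> j \<Longrightarrow> (\<lambda>t. skip_loop \<rho> i j (t + i)) = (\<lambda>t. \<rho> (t + j))"
  by (auto simp: skip_loop_def)

lemma is_play_skip_loop:
  assumes "is_play E v \<rho>" "i \<le> j" "\<rho> i = \<rho> j"
  shows "is_play E v (skip_loop \<rho> i j)"
  unfolding is_play_def
proof (intro conjI allI)
  show "skip_loop \<rho> i j 0 = v"
    using assms skip_loop_upto[of i j \<rho> 0] by (simp add: is_play_def)
  fix t
  consider "Suc t \<le> i" | "i \<le> t" by linarith
  then show "(skip_loop \<rho> i j t, skip_loop \<rho> i j (Suc t)) \<in> E"
  proof cases
    case 1
    then show ?thesis using assms skip_loop_upto[of i j \<rho>] by (simp add: is_play_def)
  next
    case 2
    then show ?thesis using assms by (simp add: skip_loop_def is_play_def)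
  qed
qed

lemma deviation_skip_loop:
  assumes "deviation E (skip_loop \<rho> i j) k v" "i \<le> j" "\<rho> i = \<rho> j"
  shows "deviation E \<rho> (if k \<le> i then k else k + (j - i)) v"
  using assms by (auto simp: deviation_def skip_loop_def split: if_splits)

lemma concat_play_skip_loop:
  assumes "i < k"
  shows "concat_play (map (skip_loop \<rho> i j) [0..<k]) \<pi>' =
         skip_loop (concat_play (map \<rho> [0..<k + (j - i)]) \<pi>') i j"
  using assms by (auto simp: concat_play_def skip_loop_def fun_eq_iff)

lemma cost_Suc:
  assumes "\<rho> 0 \<notin> T"
  shows "cost w T \<rho> = enat (w (\<rho> 0, \<rho> 1)) + cost w T (\<lambda>t. \<rho> (Suc t))"
proof (cases "\<exists>n. \<rho> n \<in> T")
  case True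
  then obtain n where n: "\<rho> n \<in> T" by blast
  have "(LEAST n. \<rho> n \<in> T) = Suc (LEAST n. \<rho> (Suc n) \<in> T)"
    using Least_Suc[of "\<lambda>n. \<rho> n \<in> T", OF n assms] by simp
  moreover have "\<exists>n. \<rho> (Suc n) \<in> T"
    using n assms by (cases n) auto
  ultimately show ?thesis
    using True by (simp add: cost_def sum.lessThan_Suc_shift del: sum.lessThan_Suc)
next
  case False
  then have "\<not> (\<exists>n. \<rho> (Suc n) \<in> T)" by blast
  then show ?thesis using False by (simp add: cost_def)
qed

lemma cost_shift:
  assumes "\<forall>t<m. \<rho> t \<notin> T"
  shows "cost w T \<rho> = enat (\<Sum>k<m. w (\<rho> k, \<rho> (Suc k))) + cost w T (\<lambda>t. \<rho> (t + m))"
  using assms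
proof (induction m)
  case (Suc m)
  have "cost w T (\<lambda>t. \<rho> (t + m)) =
        enat (w (\<rho> m, \<rho> (Suc m))) + cost w T (\<lambda>t. \<rho> (t + Suc m))"
    using cost_Suc[of "\<lambda>t. \<rho> (t + m)" T w] Suc.prems by simp
  then show ?case using Suc by (simp add: add.assoc)
qed (simp add: zero_enat_def)

lemma cost_cong_prefix:
  assumes "\<forall>t\<le>i. \<rho>' t = \<rho> t" "t0 \<le> i" "\<rho> t0 \<in> T"
  shows "cost w T \<rho>' = cost w T \<rho>"
proof -
  let ?L = "LEAST n. \<rho> n \<in> T"
  have L: "\<rho> ?L \<in> T" "?L \<le> t0" using assms(3) by (auto intro: LeastI Least_le)
  have "(LEAST n. \<rho>' n \<in> T) = ?L"
  proof (rule Least_equality)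
    show "\<rho>' ?L \<in> T" using L assms by auto
    fix y assume "\<rho>' y \<in> T"
    then show "?L \<le> y" using L assms by (cases "y \<le> i") (auto intro: Least_le)
  qed
  moreover have "\<rho>' t0 \<in> T" using assms by auto
  moreover have "(\<Sum>k < ?L. w (\<rho>' k, \<rho>' (Suc k))) = (\<Sum>k < ?L. w (\<rho> k, \<rho> (Suc k)))"
    using L assms by (intro sum.cong) auto
  ultimately show ?thesis using assms(3) unfolding cost_def by auto
qed

lemma cost_skip_loop_unvisited:
  assumes "i \<le> j" "\<rho> i = \<rho> j" "\<forall>t<j. \<rho> t \<notin> T"
  shows "cost w T \<rho> = enat (\<Sum>k\<in>{i..<j}. w (\<rho> k, \<rho> (Suc k))) + cost w T (skip_loop \<rho> i j)"
proof -
  let ?f = "\<lambda>k. w (\<rho> k, \<rho> (Suc k))"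
  have "cost w T (skip_loop \<rho> i j) =
        enat (\<Sum>k<i. w (skip_loop \<rho> i j k, skip_loop \<rho> i j (Suc k))) +
        cost w T (\<lambda>t. \<rho> (t + j))"
    using cost_shift[of i "skip_loop \<rho> i j" T w] assms by (simp add: skip_loop_shift skip_loop_def)
  also have "(\<Sum>k<i. w (skip_loop \<rho> i j k, skip_loop \<rho> i j (Suc k))) = (\<Sum>k<i. ?f k)"
    using assms by (intro sum.cong) (simp_all add: skip_loop_upto)
  finally have skip:
      "cost w T (skip_loop \<rho> i j) = enat (\<Sum>k<i. ?f k) + cost w T (\<lambda>t. \<rho> (t + j))" .
  have "(\<Sum>k<j. ?f k) = (\<Sum>k<i. ?f k) + (\<Sum>k\<in>{i..<j}. ?f k)"
    using assms(1) by (simp add: lessThan_atLeast0 sum.atLeastLessThan_concat)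
  then show ?thesis
    using cost_shift[of j \<rho> T w] assms(3) skip by (simp add: ac_simps)
qed

lemma cost_skip_loop_visited:
  assumes "i \<le> j" "\<rho> i = \<rho> j" "t \<le> i" "\<rho> t \<in> T"
  shows "cost w T (skip_loop \<rho> i j) = cost w T \<rho>"
  using assms by (intro cost_cong_prefix[of i _ _ t]) (simp_all add: skip_loop_upto)

lemma cost_skip_loop_le:
  assumes "i \<le> j" "\<rho> i = \<rho> j" "(\<forall>t<j. \<rho> t \<notin> T) \<or> (\<exists>t\<le>i. \<rho> t \<in> T)"
  shows "cost w T (skip_loop \<rho> i j) \<le> cost w T \<rho>"
  using assms(3)
proof
  assume "\<forall>t<j. \<rho> t \<notin> T"
  then show ?thesis
    using assms(1,2) cost_skip_loop_unvisited[of i j \<rho> T w] by (simp add: add_increasing)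
next
  assume "\<exists>t\<le>i. \<rho> t \<in> T"
  then show ?thesis
    using assms(1,2) cost_skip_loop_visited[of i j \<rho> _ T w] by force
qed

definition punishable ::
  "('v \<times> 'v) set \<Rightarrow> 'v set \<Rightarrow> ('v \<times> 'v \<Rightarrow> nat) \<Rightarrow> ('v \<times> 'v \<Rightarrow> nat) \<Rightarrow>
   'v set \<Rightarrow> 'v set \<Rightarrow> nat \<Rightarrow> 'v list \<Rightarrow> 'v \<Rightarrow> enat \<Rightarrow> bool" where
  "punishable E V0 w0 w1 T0 T1 c h v d \<longleftrightarrow>
     (\<exists>\<sigma>. strategy0 V0 E \<sigma> \<and>
        (\<forall>\<pi>'. is_play E v \<pi>' \<and> consistent0 V0 \<sigma> \<pi>' \<longrightarrow>
           cost w0 T0 (concat_play h \<pi>') \<le> enat c \<or> cost w1 T1 (concat_play h \<pi>') > d))"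

lemma c_witness_altdef:
  "c_witness E V0 w0 w1 T0 T1 v0 c \<pi> \<longleftrightarrow>
     is_play E v0 \<pi> \<and> cost w0 T0 \<pi> \<le> enat c \<and>
     (\<forall>k v. deviation E \<pi> k v \<longrightarrow>
        punishable E V0 w0 w1 T0 T1 c (map \<pi> [0..<k]) v (cost w1 T1 \<pi>))"
  unfolding c_witness_def punishable_def ..

lemma punishable_mono:
  "punishable E V0 w0 w1 T0 T1 c h v d \<Longrightarrow> d' \<le> d \<Longrightarrow> punishable E V0 w0 w1 T0 T1 c h v d'"
  unfolding punishable_def by (meson order.strict_trans1)

lemma punishable_skip_loop:
  assumes loop: "i < j" "\<pi> i = \<pi> j" and "i < k"
    and T1_unvisited: "\<forall>t<j. \<pi> t \<notin> T1"
    and T0_spared: "(\<forall>t<j. \<pi> t \<notin> T0) \<or> (\<exists>t\<le>i. \<pi> t \<in> T0)"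
    and "punishable E V0 w0 w1 T0 T1 c (map \<pi> [0..<k + (j - i)]) v (cost w1 T1 \<pi>)"
  shows "punishable E V0 w0 w1 T0 T1 c (map (skip_loop \<pi> i j) [0..<k]) v
           (cost w1 T1 (skip_loop \<pi> i j))"
proof -
  let ?h = "map \<pi> [0..<k + (j - i)]"
  obtain \<sigma> where \<sigma>: "strategy0 V0 E \<sigma>" and
    punish: "\<And>\<pi>'. is_play E v \<pi>' \<Longrightarrow> consistent0 V0 \<sigma> \<pi>' \<Longrightarrow>
      cost w0 T0 (concat_play ?h \<pi>') \<le> enat c \<or> cost w1 T1 (concat_play ?h \<pi>') > cost w1 T1 \<pi>"
    using assms(6) unfolding punishable_def by blast
  have "cost w0 T0 (skip_loop \<rho> i j) \<le> enat c \<or>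
        cost w1 T1 (skip_loop \<rho> i j) > cost w1 T1 (skip_loop \<pi> i j)"
    if "is_play E v \<pi>'" "consistent0 V0 \<sigma> \<pi>'" and \<rho>: "\<rho> = concat_play ?h \<pi>'" for \<pi>' \<rho>
  proof -
    have agree: "\<forall>t\<le>j. \<rho> t = \<pi> t"
      using \<open>i < k\<close> loop(1) by (auto simp: \<rho> concat_play_def)
    have "(\<Sum>n\<in>{i..<j}. w1 (\<rho> n, \<rho> (Suc n))) = (\<Sum>n\<in>{i..<j}. w1 (\<pi> n, \<pi> (Suc n)))"
      using agree by (intro sum.cong) auto
    then have "cost w1 T1 \<rho> > cost w1 T1 \<pi> \<Longrightarrow>
               cost w1 T1 (skip_loop \<rho> i j) > cost w1 T1 (skip_loop \<pi> i j)"
      using cost_skip_loop_unvisited[of i j \<rho> T1 w1] cost_skip_loop_unvisited[of i j \<pi> T1 w1]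
        agree loop T1_unvisited by simp
    moreover have "cost w0 T0 (skip_loop \<rho> i j) \<le> cost w0 T0 \<rho>"
      using agree loop T0_spared by (intro cost_skip_loop_le) auto
    ultimately show ?thesis
      using punish[OF that(1,2)] unfolding \<rho>[symmetric] by (meson order_trans)
  qed
  then show ?thesis
    using \<sigma> unfolding punishable_def concat_play_skip_loop[OF \<open>i < k\<close>] by blast
qed

lemma c_witness_skip_loop:
  assumes wit: "c_witness E V0 w0 w1 T0 T1 v0 c \<pi>" and loop: "i < j" "\<pi> i = \<pi> j"
    and T1_unvisited: "\<forall>t<j. \<pi> t \<notin> T1"
    and T0_spared: "(\<forall>t<j. \<pi> t \<notin> T0) \<or> (\<exists>t\<le>i. \<pi> t \<in> T0)"
  shows "c_witness E V0 w0 w1 T0 T1 v0 c (skip_loop \<pi> i j)"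
  unfolding c_witness_altdef
proof (intro conjI allI impI)
  have play: "is_play E v0 \<pi>" and c0: "cost w0 T0 \<pi> \<le> enat c"
    and dev: "\<And>k v. deviation E \<pi> k v \<Longrightarrow>
                punishable E V0 w0 w1 T0 T1 c (map \<pi> [0..<k]) v (cost w1 T1 \<pi>)"
    using wit unfolding c_witness_altdef by auto
  show "is_play E v0 (skip_loop \<pi> i j)"
    using play loop by (simp add: is_play_skip_loop)
  show "cost w0 T0 (skip_loop \<pi> i j) \<le> enat c"
    using cost_skip_loop_le[of i j \<pi> T0 w0] loop T0_spared c0 by simp
  fix k v assume d: "deviation E (skip_loop \<pi> i j) k v"
  show "punishable E V0 w0 w1 T0 T1 c (map (skip_loop \<pi> i j) [0..<k]) v
          (cost w1 T1 (skip_loop \<pi> i j))"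
  proof (cases "k \<le> i")
    case True
    have "map (skip_loop \<pi> i j) [0..<k] = map \<pi> [0..<k]"
      using True by (simp add: skip_loop_def)
    moreover have "cost w1 T1 (skip_loop \<pi> i j) \<le> cost w1 T1 \<pi>"
      using cost_skip_loop_le[of i j \<pi> T1 w1] loop T1_unvisited by simp
    moreover have "deviation E \<pi> k v"
      using deviation_skip_loop[OF d] True loop by simp
    ultimately show ?thesis
      using dev punishable_mono by metis
  next
    case False
    then have "deviation E \<pi> (k + (j - i)) v"
      using deviation_skip_loop[OF d] loop by simp
    then show ?thesis
      using False loop T1_unvisited T0_spared dev by (intro punishable_skip_loop) auto
  qed
qed

lemma repeat_within_window:
  assumes "finite V" "\<forall>t. \<rho> t \<in> V"
  shows "\<exists>i j. a \<le> i \<and> i < j \<and> j \<le> a + card V \<and> \<rho> i = \<rho> j"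
proof -
  have "\<not> inj_on \<rho> {a..a + card V}"
  proof
    assume "inj_on \<rho> {a..a + card V}"
    moreover have "\<rho> ` {a..a + card V} \<subseteq> V" using assms by auto
    ultimately have "card {a..a + card V} \<le> card V" using card_inj_on_le assms(1) by blast
    then show False by simp
  qed
  then obtain x y where xy: "x \<in> {a..a + card V}" "y \<in> {a..a + card V}" "x \<noteq> y" "\<rho> x = \<rho> y"
    unfolding inj_on_def by blast
  show ?thesis
  proof (cases "x < y")
    case True
    with xy show ?thesis by auto
  next
    case False
    with xy show ?thesis by (intro exI[of _ y] exI[of _ x]) auto
  qed
qed

lemma exists_loop_sparing_first_visit:
  assumes "finite V" "\<forall>t. \<rho> t \<in> V"
  shows "\<exists>i j. i < j \<and> j \<le> 2 * card V \<and> \<rho> i = \<rho> j \<and>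
           ((\<forall>t<j. \<rho> t \<notin> T) \<or> (\<exists>t\<le>i. \<rho> t \<in> T))"
proof (cases "\<exists>t\<le>card V. \<rho> t \<in> T")
  case True
  then obtain t where "t \<le> card V" "\<rho> t \<in> T" by blast
  moreover obtain i j where "card V \<le> i" "i < j" "j \<le> card V + card V" "\<rho> i = \<rho> j"
    using repeat_within_window[OF assms, of "card V"] by blast
  ultimately show ?thesis by (intro exI[of _ i] exI[of _ j]) auto
next
  case False
  obtain i j where "i < j" "j \<le> card V" "\<rho> i = \<rho> j"
    using repeat_within_window[OF assms, of 0] by auto
  with False show ?thesis by (intro exI[of _ i] exI[of _ j]) auto
qed

lemma is_play_in_vertices:
  assumes "E \<subseteq> V \<times> V" "v \<in> V" "is_play E v \<rho>"
  shows "\<rho> t \<in> V"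
  using assms by (cases t) (auto simp: is_play_def)

lemma cost_le_hit_index:
  assumes "is_play E v \<rho>" "\<forall>e\<in>E. w e \<le> W" "\<rho> n \<in> T"
  shows "cost w T \<rho> \<le> enat (n * W)"
proof -
  let ?L = "LEAST n. \<rho> n \<in> T"
  have "(\<Sum>k<?L. w (\<rho> k, \<rho> (Suc k))) \<le> of_nat (card {..<?L}) * W"
    by (rule sum_bounded_above) (use assms(1,2) in \<open>auto simp: is_play_def\<close>)
  also have "\<dots> \<le> n * W"
    using Least_le[of "\<lambda>n. \<rho> n \<in> T", OF assms(3)] by simp
  finally show ?thesis
    using assms(3) by (auto simp: cost_def)
qed

lemma weight_le_max_weight:
  assumes "finite E" "e \<in> E"
  shows "w1 e \<le> max_weight E w0 w1"
  using assms by (simp add: max_weight_def)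

lemma cost_le_hit_index_max_weight:
  assumes "well_formed_game V E V0 T0 T1 v0" "is_play E v \<rho>" "\<rho> n \<in> T"
  shows "cost w1 T \<rho> \<le> enat (n * max_weight E w0 w1)"
proof -
  have "finite E"
    using assms(1) finite_subset unfolding well_formed_game_def by blast
  then show ?thesis
    using assms(2,3) by (intro cost_le_hit_index) (auto simp: weight_le_max_weight)
qed

lemma c_witness_cost1_bounded_if_hit:
  assumes game: "well_formed_game V E V0 T0 T1 v0"
  shows "c_witness E V0 w0 w1 T0 T1 v0 c \<rho> \<Longrightarrow> \<rho> M \<in> T1 \<Longrightarrow>
    \<exists>\<pi>'. c_witness E V0 w0 w1 T0 T1 v0 c \<pi>' \<and>
         cost w1 T1 \<pi>' \<le> enat (2 * card V * max_weight E w0 w1)"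
proof (induction M arbitrary: \<rho> rule: less_induct)
  case (less M)
  have finV: "finite V" and EV: "E \<subseteq> V \<times> V" and v0V: "v0 \<in> V"
    using game unfolding well_formed_game_def by auto
  have play: "is_play E v0 \<rho>"
    using less.prems(1) unfolding c_witness_def by blast
  show ?case
  proof (cases "\<exists>t\<le>2 * card V. \<rho> t \<in> T1")
    case True
    then obtain t where "t \<le> 2 * card V" "\<rho> t \<in> T1" by blast
    then have "cost w1 T1 \<rho> \<le> enat (t * max_weight E w0 w1)"
      using cost_le_hit_index_max_weight[OF game play] by blast
    also have "\<dots> \<le> enat (2 * card V * max_weight E w0 w1)"
      using \<open>t \<le> 2 * card V\<close> by simp
    finally show ?thesis using less.prems(1) by blast
  next
    case False
    have "\<forall>t. \<rho> t \<in> V"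
      using is_play_in_vertices[OF EV v0V play] by blast
    then obtain i j where loop: "i < j" "j \<le> 2 * card V" "\<rho> i = \<rho> j"
      and T0_spared: "(\<forall>t<j. \<rho> t \<notin> T0) \<or> (\<exists>t\<le>i. \<rho> t \<in> T0)"
      using exists_loop_sparing_first_visit[OF finV, of \<rho> T0] by blast
    have T1_unvisited: "\<forall>t<j. \<rho> t \<notin> T1"
      using False loop(2) by auto
    have "c_witness E V0 w0 w1 T0 T1 v0 c (skip_loop \<rho> i j)"
      using less.prems(1) loop(1,3) T1_unvisited T0_spared by (rule c_witness_skip_loop)
    moreover have "\<not> M \<le> 2 * card V"
      using False less.prems(2) by blast
    with loop(2) have "j < M" by linarith
    then have "skip_loop \<rho> i j (M - (j - i)) = \<rho> M"
      using loop(1) by (auto simp: skip_loop_def)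
    then have "skip_loop \<rho> i j (M - (j - i)) \<in> T1"
      using less.prems(2) by simp
    moreover have "M - (j - i) < M"
      using \<open>j < M\<close> loop(1) by linarith
    ultimately show ?thesis using less.IH by blast
  qed
qed

theorem lemma28:
  fixes V :: "'v set" and E :: "('v \<times> 'v) set" and V0 T0 T1 :: "'v set" and v0 :: 'v
    and w0 w1 :: "'v \<times> 'v \<Rightarrow> nat" and c :: nat and \<pi> :: "nat \<Rightarrow> 'v"
  assumes "well_formed_game V E V0 T0 T1 v0"
    and "c_witness E V0 w0 w1 T0 T1 v0 c \<pi>"
  shows "\<exists>\<pi>'. c_witness E V0 w0 w1 T0 T1 v0 c \<pi>' \<and>
           (cost w1 T1 \<pi>' = \<infinity> \<or> cost w1 T1 \<pi>' \<le> enat (2 * card V * max_weight E w0 w1))"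
proof (cases "\<exists>M. \<pi> M \<in> T1")
  case True
  then show ?thesis
    using c_witness_cost1_bounded_if_hit[OF assms(1) assms(2)] by blast
next
  case False
  then have "cost w1 T1 \<pi> = \<infinity>" by (simp add: cost_def)
  then show ?thesis using assms(2) by blast
qed

end
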